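(* Let $\mathcal{H}$ be a real Hilbert space, suppose $B\colon \mathcal{H}\to\mathcal{H}$ is monotone and $\rho\geq 0$. Then the operator $B':=B-\rho I$ is $L'$-Lipschitz, where $L'=L+\rho$ if $B$ is $L$-Lipschitz; $L'=L-\rho$ if $B$ is $1/L$-cocoercive and $\rho\leq\frac{L}{2}$; and $L'=\rho$ if $B$ is $1/L$-cocoercive and $\rho>\frac{L}{2}$.
   Context: $B$ is $1/L$-cocoercive if $\langle x-y,B(x)-B(y)\rangle\geq\frac1L\|B(x)-B(y)\|^2$ for all $x,y\in\mathcal{H}$. $I$ is the identity operator. *)

theory Defs
  imports "HOL-Analysis.Analysis"
begin

definition monotone_op :: "('a::real_inner \<Rightarrow> 'a) \<Rightarrow> bool" where
  "monotone_op B \<longleftrightarrow> (\<forall>x y. inner (x - y) (B x - B y) \<ge> 0)"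

definition cocoercive :: "real \<Rightarrow> ('a::real_inner \<Rightarrow> 'a) \<Rightarrow> bool" where
  "cocoercive L B \<longleftrightarrow> (\<forall>x y. inner (x - y) (B x - B y) \<ge> (1 / L) * (norm (B x - B y))\<^sup>2)"

end

theory Submission
  imports Defs
begin

text \<open>Since \<open>\<langle>u, v\<rangle> \<ge> \<parallel>v\<parallel>\<^sup>2 / L\<close> is equivalent to \<open>\<parallel>v - (L/2) u\<parallel> \<le> (L/2) \<parallel>u\<parallel>\<close>,
  a \<open>1/L\<close>-cocoercive \<open>B\<close> makes \<open>B - (L/2) I\<close> an \<open>L/2\<close>-Lipschitz map. Writing
  \<open>B - \<rho> I = (B - (L/2) I) - (\<rho> - L/2) I\<close>, the triangle inequality gives the constant
  \<open>L/2 + \<bar>\<rho> - L/2\<bar>\<close>, which is \<open>L - \<rho>\<close> for \<open>\<rho> \<le> L/2\<close> and \<open>\<rho>\<close> otherwise. In the Lipschitz case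
  the triangle inequality alone gives \<open>L + \<rho>\<close>.\<close>

lemma lipschitz_on_minus_scaleR:
  fixes f :: "'a::real_normed_vector \<Rightarrow> 'a"
  assumes "C-lipschitz_on U f"
  shows "(C + \<bar>a\<bar>)-lipschitz_on U (\<lambda>x. f x - a *\<^sub>R x)"
  using lipschitz_on_diff[OF assms lipschitz_on_cmult[OF lipschitz_on_id, where a = a]] by simp

lemma cocoercive_ineq_imp_norm_half_shift_le:
  fixes u v :: "'a::real_inner"
  assumes "L > 0" and "(1 / L) * (norm v)\<^sup>2 \<le> inner u v"
  shows "norm (v - (L / 2) *\<^sub>R u) \<le> (L / 2) * norm u"
proof (rule power2_le_imp_le)
  have "(norm v)\<^sup>2 \<le> L * inner u v"
    using assms by (simp add: field_simps)
  have "(norm (v - (L / 2) *\<^sub>R u))\<^sup>2 = (norm v)\<^sup>2 - L * inner u v + (L / 2)\<^sup>2 * (norm u)\<^sup>2"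
    unfolding power2_norm_eq_inner
    by (simp add: inner_diff inner_commute[of v u] power2_eq_square algebra_simps)
  also have "\<dots> \<le> (L / 2)\<^sup>2 * (norm u)\<^sup>2"
    using \<open>(norm v)\<^sup>2 \<le> L * inner u v\<close> by linarith
  also have "\<dots> = ((L / 2) * norm u)\<^sup>2"
    by (rule power_mult_distrib[symmetric])
  finally show "(norm (v - (L / 2) *\<^sub>R u))\<^sup>2 \<le> ((L / 2) * norm u)\<^sup>2" .
  show "0 \<le> L / 2 * norm u"
    using assms(1) by simp
qed

lemma cocoercive_imp_lipschitz_on_half_shift:
  fixes B :: "'a::real_inner \<Rightarrow> 'a"
  assumes "L > 0" and "cocoercive L B"
  shows "(L / 2)-lipschitz_on S (\<lambda>x. B x - (L / 2) *\<^sub>R x)"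
proof (rule lipschitz_onI)
  fix x y
  have "norm ((B x - B y) - (L / 2) *\<^sub>R (x - y)) \<le> (L / 2) * norm (x - y)"
    using assms by (intro cocoercive_ineq_imp_norm_half_shift_le) (auto simp: cocoercive_def)
  then show "dist (B x - (L / 2) *\<^sub>R x) (B y - (L / 2) *\<^sub>R y) \<le> L / 2 * dist x y"
    by (simp add: dist_norm algebra_simps)
qed (use assms(1) in simp)

lemma cocoercive_imp_lipschitz_on_minus_scaleR:
  fixes B :: "'a::real_inner \<Rightarrow> 'a"
  assumes "L > 0" and "cocoercive L B"
  shows "(L / 2 + \<bar>\<rho> - L / 2\<bar>)-lipschitz_on S (\<lambda>x. B x - \<rho> *\<^sub>R x)"
proof -
  have "(L / 2 + \<bar>\<rho> - L / 2\<bar>)-lipschitz_on S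
      (\<lambda>x. (B x - (L / 2) *\<^sub>R x) - (\<rho> - L / 2) *\<^sub>R x)"
    by (rule lipschitz_on_minus_scaleR[OF cocoercive_imp_lipschitz_on_half_shift[OF assms]])
  then show ?thesis
    by (simp add: algebra_simps)
qed

theorem lemma4p1:
  fixes B :: "'a::{real_inner, complete_space} \<Rightarrow> 'a" and L \<rho> :: real
  assumes "monotone_op B" and "\<rho> \<ge> 0"
  shows "(lipschitz_on L UNIV B \<longrightarrow> lipschitz_on (L + \<rho>) UNIV (\<lambda>x. B x - \<rho> *\<^sub>R x))
       \<and> (L > 0 \<and> cocoercive L B \<and> \<rho> \<le> L / 2 \<longrightarrow> lipschitz_on (L - \<rho>) UNIV (\<lambda>x. B x - \<rho> *\<^sub>R x))
       \<and> (L > 0 \<and> cocoercive L B \<and> \<rho> > L / 2 \<longrightarrow> lipschitz_on \<rho> UNIV (\<lambda>x. B x - \<rho> *\<^sub>R x))"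
proof (intro conjI impI)
  assume "lipschitz_on L UNIV B"
  then show "lipschitz_on (L + \<rho>) UNIV (\<lambda>x. B x - \<rho> *\<^sub>R x)"
    using lipschitz_on_minus_scaleR[of L UNIV B \<rho>] \<open>\<rho> \<ge> 0\<close> by simp
next
  assume "L > 0 \<and> cocoercive L B \<and> \<rho> \<le> L / 2"
  then show "lipschitz_on (L - \<rho>) UNIV (\<lambda>x. B x - \<rho> *\<^sub>R x)"
    using cocoercive_imp_lipschitz_on_minus_scaleR[of L B \<rho> UNIV] by simp
next
  assume "L > 0 \<and> cocoercive L B \<and> \<rho> > L / 2"
  then show "lipschitz_on \<rho> UNIV (\<lambda>x. B x - \<rho> *\<^sub>R x)"
    using cocoercive_imp_lipschitz_on_minus_scaleR[of L B \<rho> UNIV] by simp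
qed

end
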